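(* For all constants $c_1,c_2>0$ and every constant $\epsilon>0$ there is a constant $K$ such that the following holds for all $n\ge 3$: every $B_2$-circuit with $n$ inputs, size at most $c_1 n$ and depth at most $c_2\log n$ computing a function $f:\{0,1\}^n\to\{0,1\}$ can be converted into a nondeterministic formula computing $f$ with $n$ actual inputs, at most $K n/\log\log n$ guess inputs, and size at most $K n^{1+\epsilon}$.
   Context: A circuit is a directed acyclic graph whose in-degree-0 nodes (inputs) are each labeled by a variable or a constant $0$ or $1$, whose other nodes (gates) are each labeled by a Boolean function, with one designated output node. $B_2$ is the set of all Boolean functions $\{0,1\}^2\to\{0,1\}$; a $B_2$-circuit is a circuit whose gates have fan-in $2$ and are labeled by functions in $B_2$. A formula is a circuit in which every node has fan-out at most $1$ (here with fan-in-$2$ gates labeled by functions in $B_2$). A nondeterministic circuit (resp. formula) has actual inputs $x\in\{0,1\}^n$ and guess inputs $y\in\{0,1\}^m$ and computes $f$ where $f(x)=1$ iff there exists $y$ making the output $1$. Size is the number of gates; depth is the length of the longest path from an input to the output. *)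

theory Defs
  imports Complex_Main
begin

text \<open>A circuit is a list of nodes in topological order.\<close>

datatype node = CVar nat | CConst bool | CGate "bool \<Rightarrow> bool \<Rightarrow> bool" nat nat

record circuit =
  nodes :: "node list"
  out_node :: nat

definition node_ok :: "nat \<Rightarrow> node list \<Rightarrow> nat \<Rightarrow> bool" where
  "node_ok n cs k = (case cs ! k of
      CVar i \<Rightarrow> i < n
    | CConst b \<Rightarrow> True
    | CGate g i j \<Rightarrow> i < k \<and> j < k)"

definition wf_circuit :: "nat \<Rightarrow> circuit \<Rightarrow> bool" where
  "wf_circuit n C = (out_node C < length (nodes C) \<and>
      (\<forall>k < length (nodes C). node_ok n (nodes C) k))"

function node_val :: "node list \<Rightarrow> (nat \<Rightarrow> bool) \<Rightarrow> nat \<Rightarrow> bool" where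
  "node_val cs x k = (if k < length cs then
      (case cs ! k of
         CVar i \<Rightarrow> x i
       | CConst b \<Rightarrow> b
       | CGate g i j \<Rightarrow> (if i < k \<and> j < k then g (node_val cs x i) (node_val cs x j) else False))
    else False)"
  by auto
termination by (relation "measure (\<lambda>(cs, x, k). k)") auto

function node_depth :: "node list \<Rightarrow> nat \<Rightarrow> nat" where
  "node_depth cs k = (if k < length cs then
      (case cs ! k of
         CGate g i j \<Rightarrow> (if i < k \<and> j < k then Suc (max (node_depth cs i) (node_depth cs j)) else 0)
       | _ \<Rightarrow> 0)
    else 0)"
  by auto
termination by (relation "measure (\<lambda>(cs, k). k)") auto

definition circuit_eval :: "circuit \<Rightarrow> (nat \<Rightarrow> bool) \<Rightarrow> bool" where
  "circuit_eval C x = node_val (nodes C) x (out_node C)"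

definition circuit_depth :: "circuit \<Rightarrow> nat" where
  "circuit_depth C = node_depth (nodes C) (out_node C)"

definition circuit_size :: "circuit \<Rightarrow> nat" where
  "circuit_size C = length (filter (\<lambda>v. case v of CGate _ _ _ \<Rightarrow> True | _ \<Rightarrow> False) (nodes C))"

text \<open>A formula (fan-out at most 1, fan-in-2 B2 gates) is a tree. Leaves are labelled
by an actual input x_i (Inl i), a guess input y_j (Inr j), or a constant.\<close>

datatype formula = FVar "nat + nat" | FConst bool | FGate "bool \<Rightarrow> bool \<Rightarrow> bool" formula formula

fun feval :: "formula \<Rightarrow> (nat \<Rightarrow> bool) \<Rightarrow> (nat \<Rightarrow> bool) \<Rightarrow> bool" where
  "feval (FVar (Inl i)) x y = x i"
| "feval (FVar (Inr j)) x y = y j"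
| "feval (FConst b) x y = b"
| "feval (FGate g a b) x y = g (feval a x y) (feval b x y)"

fun fsize :: "formula \<Rightarrow> nat" where
  "fsize (FVar _) = 0"
| "fsize (FConst _) = 0"
| "fsize (FGate g a b) = Suc (fsize a + fsize b)"

fun fvars :: "formula \<Rightarrow> (nat + nat) set" where
  "fvars (FVar v) = {v}"
| "fvars (FConst _) = {}"
| "fvars (FGate g a b) = fvars a \<union> fvars b"

definition nd_formula :: "nat \<Rightarrow> nat \<Rightarrow> formula \<Rightarrow> bool" where
  "nd_formula n m F = (\<forall>v \<in> fvars F. case v of Inl i \<Rightarrow> i < n | Inr j \<Rightarrow> j < m)"

definition nd_computes :: "formula \<Rightarrow> ((nat \<Rightarrow> bool) \<Rightarrow> bool) \<Rightarrow> bool" where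
  "nd_computes F f = (\<forall>x. f x = (\<exists>y. feval F x y))"

end

theory Submission
  imports Defs
begin

text \<open>Valiant's depth reduction. Label every wire u \<rightarrow> v of a circuit of depth D with the
highest base-q digit in which the depths of u and v differ. If q^b \<le> D, the labels below b
split the at most 2s wires into b classes, so one class j has at most 2s/b wires. Cutting the
circuit at the inputs of these wires, the depth with digit j deleted strictly drops along every
remaining wire and stays below 2D/q, so each cut node and the output are computed from the cut
nodes by formulas of size 2^(2D/q). A nondeterministic formula guesses the values of the cut
nodes, checks every guess against its formula and evaluates the output formula. For
D = c2 log n and q \<approx> 2 c2/\<epsilon> these formulas have size n^\<epsilon>, and the largest b with
q^b \<le> D is of order log log n, which gives O(n / log log n) guesses.\<close>

declare node_val.simps[simp del] node_depth.simps[simp del]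

function cut_formula :: "node list \<Rightarrow> nat set \<Rightarrow> (nat \<Rightarrow> nat) \<Rightarrow> nat \<Rightarrow> formula" where
  "cut_formula cs R idx k = (if k < length cs then
      (case cs ! k of
         CVar i \<Rightarrow> FVar (Inl i)
       | CConst b \<Rightarrow> FConst b
       | CGate g i j \<Rightarrow> (if i < k \<and> j < k then
            FGate g (if i \<in> R then FVar (Inr (idx i)) else cut_formula cs R idx i)
                    (if j \<in> R then FVar (Inr (idx j)) else cut_formula cs R idx j)
          else FConst False))
    else FConst False)"
  by auto
termination by (relation "measure (\<lambda>(cs, R, idx, k). k)") auto

declare cut_formula.simps[simp del]

lemma feval_cut_formula:
  assumes "\<And>r. r \<in> R \<Longrightarrow> r < k \<Longrightarrow> y (idx r) = node_val cs x r"
  shows "feval (cut_formula cs R idx k) x y = node_val cs x k"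
  using assms
proof (induction k rule: less_induct)
  case (less k)
  show ?case
    by (subst cut_formula.simps, subst node_val.simps, cases "cs ! k") (use less in auto)
qed

lemma feval_cut_formula_if_guesses_consistent:
  assumes "\<forall>r\<in>R. y (idx r) = feval (cut_formula cs R idx r) x y"
  shows "feval (cut_formula cs R idx k) x y = node_val cs x k"
proof (induction k rule: less_induct)
  case (less k)
  show ?case by (rule feval_cut_formula) (use assms less in auto)
qed

lemma fvars_cut_formula:
  assumes "\<forall>k<length cs. node_ok n cs k"
  shows "fvars (cut_formula cs R idx k) \<subseteq> Inl ` {..<n} \<union> Inr ` idx ` R"
proof (induction k rule: less_induct)
  case (less k)
  show ?case
    by (subst cut_formula.simps, cases "cs ! k")
      (use less assms[rule_format, of k] in \<open>auto simp: node_ok_def\<close>)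
qed

lemma fsize_cut_formula_less:
  assumes "\<And>v g i j. v \<in> S \<Longrightarrow> v < length cs \<Longrightarrow> cs ! v = CGate g i j \<Longrightarrow> i < v \<Longrightarrow> j < v \<Longrightarrow>
      (i \<notin> R \<longrightarrow> i \<in> S \<and> P i < P v) \<and> (j \<notin> R \<longrightarrow> j \<in> S \<and> P j < P v)"
    and "v \<in> S"
  shows "fsize (cut_formula cs R idx v) < 2 ^ Suc (P v)"
  using \<open>v \<in> S\<close>
proof (induction v rule: less_induct)
  case (less v)
  have child: "fsize (if c \<in> R then FVar (Inr (idx c)) else cut_formula cs R idx c) < 2 ^ P v"
    if "c \<notin> R \<longrightarrow> c \<in> S \<and> P c < P v" "c < v" for c
  proof (cases "c \<in> R")
    case False
    then have "fsize (cut_formula cs R idx c) < 2 ^ Suc (P c)" using that less.IH by blast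
    also have "\<dots> \<le> 2 ^ P v" using False that by (intro power_increasing) auto
    finally show ?thesis using False by simp
  qed simp
  show ?case
  proof (cases "v < length cs \<and> (\<exists>g i j. cs ! v = CGate g i j \<and> i < v \<and> j < v)")
    case True
    then obtain g i j where v: "v < length cs" "cs ! v = CGate g i j" "i < v" "j < v" by blast
    show ?thesis
      using child[of i] child[of j] assms(1)[OF less.prems v] v by (subst cut_formula.simps) simp
  next
    case False
    then show ?thesis by (subst cut_formula.simps) (auto split: node.split)
  qed
qed

lemma node_depth_child_less:
  assumes "k < length cs" "cs ! k = CGate g i j" "i < k" "j < k"
  shows "node_depth cs i < node_depth cs k" "node_depth cs j < node_depth cs k"
  using assms by (subst (2) node_depth.simps; simp)+

lemma fsize_cut_formula_less_depth: "fsize (cut_formula cs R idx v) < 2 ^ Suc (node_depth cs v)"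
proof (cases "v < length cs")
  case True
  then show ?thesis
    by (intro fsize_cut_formula_less[where S = "{..<length cs}"]) (auto dest: node_depth_child_less)
qed (subst cut_formula.simps; simp)

fun fconj :: "formula list \<Rightarrow> formula \<Rightarrow> formula" where
  "fconj [] G = G"
| "fconj (A # As) G = FGate (\<and>) A (fconj As G)"

lemma feval_fconj: "feval (fconj As G) x y \<longleftrightarrow> (\<forall>A\<in>set As. feval A x y) \<and> feval G x y"
  by (induction As) auto

lemma fsize_fconj: "fsize (fconj As G) = sum_list (map fsize As) + length As + fsize G"
  by (induction As) auto

lemma fvars_fconj: "fvars (fconj As G) = \<Union>(fvars ` set As) \<union> fvars G"
  by (induction As) auto

lemma nd_formula_of_cut_set:
  assumes wf: "wf_circuit n C" and fin: "finite R"
    and size: "\<And>idx v. v \<in> insert (out_node C) R \<Longrightarrow> fsize (cut_formula (nodes C) R idx v) \<le> M"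
  shows "\<exists>F. nd_formula n (card R) F \<and> nd_computes F (circuit_eval C)
            \<and> fsize F \<le> (card R + 1) * (M + 2)"
proof -
  obtain idx where idx: "bij_betw idx R {..<card R}"
    using ex_bij_betw_finite_nat[OF fin] by (auto simp: atLeast0LessThan)
  define \<phi> where "\<phi> = cut_formula (nodes C) R idx"
  define rs where "rs = sorted_list_of_set R"
  have rs: "set rs = R" "distinct rs" using fin by (auto simp: rs_def)
  define F where "F = fconj (map (\<lambda>r. FGate (=) (FVar (Inr (idx r))) (\<phi> r)) rs) (\<phi> (out_node C))"
  have eval_F: "feval F x y \<longleftrightarrow> (\<forall>r\<in>R. y (idx r) = feval (\<phi> r) x y) \<and> feval (\<phi> (out_node C)) x y"
    for x y by (simp add: F_def feval_fconj rs)
  have "nd_formula n (card R) F"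
  proof -
    define V where "V = Inl ` {..<n} \<union> Inr ` idx ` R"
    have "fvars (\<phi> k) \<subseteq> V" for k
      using fvars_cut_formula wf by (simp add: \<phi>_def V_def wf_circuit_def)
    then have "fvars F \<subseteq> V" by (auto simp: F_def fvars_fconj rs V_def)
    moreover have "idx ` R \<subseteq> {..<card R}" using idx by (simp add: bij_betw_def)
    ultimately show ?thesis by (force simp: nd_formula_def V_def)
  qed
  moreover have "nd_computes F (circuit_eval C)"
    unfolding nd_computes_def
  proof (intro allI iffI)
    fix x
    assume out: "circuit_eval C x"
    define y where "y = (\<lambda>j. node_val (nodes C) x (the_inv_into R idx j))"
    have guesses: "\<forall>r\<in>R. y (idx r) = node_val (nodes C) x r"
      using idx by (auto simp: y_def bij_betw_def the_inv_into_f_f)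
    have "feval (\<phi> k) x y = node_val (nodes C) x k" for k
      unfolding \<phi>_def by (rule feval_cut_formula) (use guesses in blast)
    then have "feval F x y" using guesses out by (simp add: eval_F circuit_eval_def)
    then show "\<exists>y. feval F x y" by blast
  next
    fix x
    assume "\<exists>y. feval F x y"
    then obtain y where "feval F x y" by blast
    then show "circuit_eval C x"
      unfolding eval_F \<phi>_def circuit_eval_def
      using feval_cut_formula_if_guesses_consistent by metis
  qed
  moreover have "fsize F \<le> (card R + 1) * (M + 2)"
  proof -
    have "sum_list (map fsize (map (\<lambda>r. FGate (=) (FVar (Inr (idx r))) (\<phi> r)) rs))
        = (\<Sum>r\<in>R. Suc (fsize (\<phi> r)))"
      using rs by (simp add: sum_list_distinct_conv_sum_set o_def)
    also have "\<dots> \<le> card R * (M + 1)"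
      using sum_bounded_above[of R "\<lambda>r. Suc (fsize (\<phi> r))" "M + 1"] size by (simp add: \<phi>_def)
    finally show ?thesis
      using size[where idx = idx and v = "out_node C"] distinct_card[OF rs(2)]
      by (simp add: F_def fsize_fconj rs \<phi>_def algebra_simps)
  qed
  ultimately show ?thesis by blast
qed

definition drop_digit :: "nat \<Rightarrow> nat \<Rightarrow> nat \<Rightarrow> nat" where
  "drop_digit q j x = x div q ^ Suc j * q ^ j + x mod q ^ j"

definition highest_digit_diff :: "nat \<Rightarrow> nat \<Rightarrow> nat \<Rightarrow> nat \<Rightarrow> bool" where
  "highest_digit_diff q j x y \<longleftrightarrow> x div q ^ Suc j = y div q ^ Suc j \<and> x div q ^ j \<noteq> y div q ^ j"

lemma highest_digit_diff_unique:
  assumes "highest_digit_diff q j x y" "highest_digit_diff q j' x y"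
  shows "j = j'"
proof -
  have False if "highest_digit_diff q i x y" "highest_digit_diff q i' x y" "i < i'" for i i'
  proof -
    obtain d where d: "i' = Suc i + d" using \<open>i < i'\<close> less_iff_Suc_add by blast
    have "z div q ^ i' = z div q ^ Suc i div q ^ d" for z
      by (simp add: d power_add div_mult2_eq)
    then show False using that by (simp add: highest_digit_diff_def)
  qed
  then show ?thesis using assms by (metis linorder_neqE_nat)
qed

lemma drop_digit_strict_mono:
  assumes "q > 0" "x < y" "\<not> highest_digit_diff q j x y"
  shows "drop_digit q j x < drop_digit q j y"
proof (cases "x div q ^ Suc j = y div q ^ Suc j")
  case True
  then have "x div q ^ j = y div q ^ j" using assms(3) by (simp add: highest_digit_diff_def)
  then have "x mod q ^ j < y mod q ^ j"
    using \<open>x < y\<close> div_mult_mod_eq[of x "q ^ j"] div_mult_mod_eq[of y "q ^ j"]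
    by (metis add_less_cancel_left)
  then show ?thesis using True by (simp add: drop_digit_def)
next
  case False
  then have "Suc (x div q ^ Suc j) \<le> y div q ^ Suc j"
    using \<open>x < y\<close> by (simp add: Suc_le_eq div_le_mono le_neq_implies_less)
  then have "Suc (x div q ^ Suc j) * q ^ j \<le> y div q ^ Suc j * q ^ j" by (rule mult_le_mono1)
  moreover have "x mod q ^ j < q ^ j" using \<open>q > 0\<close> by simp
  ultimately show ?thesis by (simp add: drop_digit_def)
qed

lemma drop_digit_less:
  assumes "q > 0" "q ^ Suc j \<le> D" "x \<le> D"
  shows "drop_digit q j x < 2 * D div q"
proof -
  have "x div q ^ Suc j \<le> D div q ^ Suc j" using \<open>x \<le> D\<close> by (simp add: div_le_mono)
  then have "x div q ^ Suc j * q ^ j \<le> D div q ^ Suc j * q ^ j" by (rule mult_le_mono1)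
  moreover have "x mod q ^ j < q ^ j" using \<open>q > 0\<close> by simp
  ultimately have "Suc (drop_digit q j x) \<le> D div q ^ Suc j * q ^ j + q ^ j"
    unfolding drop_digit_def by linarith
  then have "Suc (drop_digit q j x) * q \<le> (D div q ^ Suc j * q ^ j + q ^ j) * q"
    by (rule mult_le_mono1)
  also have "\<dots> = D div q ^ Suc j * q ^ Suc j + q ^ Suc j" by (simp add: algebra_simps)
  also have "\<dots> \<le> 2 * D" using \<open>q ^ Suc j \<le> D\<close> div_times_less_eq_dividend[of D "q ^ Suc j"]
    by linarith
  finally have "Suc (drop_digit q j x) \<le> 2 * D div q"
    using \<open>q > 0\<close> less_eq_div_iff_mult_less_eq by blast
  then show ?thesis by simp
qed

definition is_gate :: "node \<Rightarrow> bool" where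
  "is_gate v \<longleftrightarrow> (case v of CGate _ _ _ \<Rightarrow> True | _ \<Rightarrow> False)"

text \<open>A wire is a pair (v, s): the first (s = True) or second input of gate v. Only gates of
depth at most D are considered, since the nodes below the output all have depth at most D.\<close>

definition gate_input :: "node list \<Rightarrow> nat \<times> bool \<Rightarrow> nat" where
  "gate_input cs e = (case cs ! fst e of CGate _ i j \<Rightarrow> if snd e then i else j | _ \<Rightarrow> 0)"

definition gate_edges :: "node list \<Rightarrow> nat \<Rightarrow> (nat \<times> bool) set" where
  "gate_edges cs D = {(v, s). v < length cs \<and> node_depth cs v \<le> D \<and> is_gate (cs ! v)}"

definition edge_class :: "node list \<Rightarrow> nat \<Rightarrow> nat \<Rightarrow> nat \<Rightarrow> (nat \<times> bool) set" where
  "edge_class cs q D j = {e \<in> gate_edges cs D.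
      highest_digit_diff q j (node_depth cs (gate_input cs e)) (node_depth cs (fst e))}"

lemma finite_gate_edges: "finite (gate_edges cs D)"
  by (rule finite_subset[of _ "{..<length cs} \<times> UNIV"]) (auto simp: gate_edges_def)

lemma card_gate_edges_le: "card (gate_edges cs D) \<le> 2 * length (filter is_gate cs)"
proof -
  have "gate_edges cs D \<subseteq> {v. v < length cs \<and> is_gate (cs ! v)} \<times> UNIV"
    by (auto simp: gate_edges_def)
  then have "card (gate_edges cs D) \<le> card ({v. v < length cs \<and> is_gate (cs ! v)} \<times> (UNIV :: bool set))"
    by (intro card_mono) auto
  then show ?thesis by (simp add: card_cartesian_product length_filter_conv_card)
qed

lemma exists_sparse_edge_class:
  assumes "b > 0"
  obtains j where "j < b" "card (edge_class cs q D j) * b \<le> card (gate_edges cs D)"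
proof -
  have fin: "finite (edge_class cs q D j)" for j
    using finite_gate_edges by (rule rev_finite_subset) (auto simp: edge_class_def)
  obtain j where j: "j < b" "card (edge_class cs q D j) = (MIN i\<in>{..<b}. card (edge_class cs q D i))"
    using Min_in[of "(\<lambda>i. card (edge_class cs q D i)) ` {..<b}"] \<open>b > 0\<close> by fastforce
  have "card (edge_class cs q D j) * b \<le> (\<Sum>i<b. card (edge_class cs q D i))"
    using sum_bounded_below[of "{..<b}" "card (edge_class cs q D j)"] j by (simp add: mult.commute)
  also have "\<dots> = card (\<Union>i<b. edge_class cs q D i)"
    using fin highest_digit_diff_unique by (intro card_UN_disjoint[symmetric]) (auto simp: edge_class_def)
  also have "\<dots> \<le> card (gate_edges cs D)"
    using finite_gate_edges by (intro card_mono) (auto simp: edge_class_def)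
  finally show ?thesis using j(1) that by blast
qed

lemma fsize_cut_formula_edge_class:
  assumes "q > 0" "q ^ Suc j \<le> D" "v < length cs" "node_depth cs v \<le> D"
  shows "fsize (cut_formula cs (gate_input cs ` edge_class cs q D j) idx v) < 2 ^ (2 * D div q)"
proof -
  define S where "S = {v. v < length cs \<and> node_depth cs v \<le> D}"
  define P where "P = drop_digit q j \<circ> node_depth cs"
  have "fsize (cut_formula cs (gate_input cs ` edge_class cs q D j) idx v) < 2 ^ Suc (P v)"
  proof (rule fsize_cut_formula_less[where S = S])
    fix v g i1 i2
    assume v: "v \<in> S" "v < length cs" "cs ! v = CGate g i1 i2" "i1 < v" "i2 < v"
    have "c \<in> S \<and> (c \<notin> gate_input cs ` edge_class cs q D j \<longrightarrow> P c < P v)"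
      if c: "c = gate_input cs (v, s)" for c s
    proof -
      have e: "(v, s) \<in> gate_edges cs D" using v by (simp add: gate_edges_def S_def is_gate_def)
      have "c < v" "node_depth cs c < node_depth cs v"
        using node_depth_child_less[OF v(2-5)] v c by (simp_all add: gate_input_def)
      moreover have "\<not> highest_digit_diff q j (node_depth cs c) (node_depth cs v)"
        if "c \<notin> gate_input cs ` edge_class cs q D j"
        using that e c by (force simp: edge_class_def)
      ultimately show ?thesis
        using v \<open>q > 0\<close> drop_digit_strict_mono by (auto simp: S_def P_def)
    qed
    from this[of i1 True] this[of i2 False] v(3)
    show "(i1 \<notin> gate_input cs ` edge_class cs q D j \<longrightarrow> i1 \<in> S \<and> P i1 < P v) \<and>
        (i2 \<notin> gate_input cs ` edge_class cs q D j \<longrightarrow> i2 \<in> S \<and> P i2 < P v)"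
      by (simp add: gate_input_def)
  qed (use assms in \<open>simp add: S_def\<close>)
  also have "\<dots> \<le> 2 ^ (2 * D div q)"
    using drop_digit_less[OF \<open>q > 0\<close> \<open>q ^ Suc j \<le> D\<close> \<open>node_depth cs v \<le> D\<close>]
    by (intro power_increasing) (auto simp: P_def)
  finally show ?thesis .
qed

lemma gate_input_in_range:
  assumes "\<forall>k<length cs. node_ok n cs k" "e \<in> gate_edges cs D"
  shows "gate_input cs e < length cs \<and> node_depth cs (gate_input cs e) \<le> D"
proof -
  obtain v s g i j where e: "e = (v, s)" "v < length cs" "node_depth cs v \<le> D" "cs ! v = CGate g i j"
    using assms(2) by (auto simp: gate_edges_def is_gate_def split: node.splits)
  then have "i < v" "j < v" using assms(1) by (auto simp: node_ok_def)
  then show ?thesis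
    using e node_depth_child_less[OF e(2,4)] by (auto simp: gate_input_def)
qed

lemma circuit_size_eq_length_filter: "circuit_size C = length (filter is_gate (nodes C))"
  by (simp only: circuit_size_def is_gate_def[abs_def])

lemma exists_small_cut_set:
  assumes wf: "wf_circuit n C" and depth: "circuit_depth C \<le> D"
    and "q > 0" "b > 0" "q ^ b \<le> D"
  obtains R where "finite R" "card R * b \<le> 2 * circuit_size C"
    "\<And>idx v. v \<in> insert (out_node C) R \<Longrightarrow> fsize (cut_formula (nodes C) R idx v) < 2 ^ (2 * D div q)"
proof -
  define cs where "cs = nodes C"
  obtain j where j: "j < b" "card (edge_class cs q D j) * b \<le> card (gate_edges cs D)"
    using exists_sparse_edge_class \<open>b > 0\<close> by blast
  define R where "R = gate_input cs ` edge_class cs q D j"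
  have fin: "finite (edge_class cs q D j)"
    using finite_gate_edges by (rule rev_finite_subset) (auto simp: edge_class_def)
  show ?thesis
  proof (rule that)
    show "finite R" using fin by (simp add: R_def)
    show "card R * b \<le> 2 * circuit_size C"
      using card_image_le[OF fin, of "gate_input cs"] j(2) card_gate_edges_le[of cs D]
      by (simp add: R_def cs_def circuit_size_eq_length_filter) (meson le_trans mult_le_mono1)
    have "q ^ Suc j \<le> D"
      using \<open>q ^ b \<le> D\<close> j(1) \<open>q > 0\<close> power_increasing[of "Suc j" b q] by simp
    moreover have "v < length cs \<and> node_depth cs v \<le> D" if "v \<in> insert (out_node C) R" for v
      using that wf depth gate_input_in_range[of cs n]
      by (auto simp: R_def edge_class_def wf_circuit_def cs_def circuit_depth_def)
    ultimately show "fsize (cut_formula (nodes C) R idx v) < 2 ^ (2 * D div q)"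
      if "v \<in> insert (out_node C) R" for idx v
      using fsize_cut_formula_edge_class[OF \<open>q > 0\<close>] that by (simp add: R_def cs_def)
  qed
qed

text \<open>The factor Suc b (instead of b) lets the case b = 0, where nothing is cut, fit the
same bounds.\<close>

lemma nd_formula_of_depth_bounded_circuit:
  assumes wf: "wf_circuit n C" and depth: "circuit_depth C \<le> D" and "q \<ge> 2"
  obtains b m F where "D < q ^ Suc b" "m * Suc b \<le> 4 * circuit_size C"
    "nd_formula n m F" "nd_computes F (circuit_eval C)"
    "fsize F \<le> (m + 1) * (2 ^ (2 * D div q + q) + 2)"
proof -
  define M :: nat where "M = 2 ^ (2 * D div q + q)"
  define b where "b = (LEAST b. D < q ^ Suc b)"
  have "D < q ^ Suc D"
  proof -
    have "D < 2 ^ D" by (rule less_exp)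
    also have "\<dots> \<le> q ^ D" using \<open>q \<ge> 2\<close> by (rule power_mono) simp
    also have "\<dots> \<le> q ^ Suc D" using \<open>q \<ge> 2\<close> by simp
    finally show ?thesis .
  qed
  then have Db: "D < q ^ Suc b" unfolding b_def by (rule LeastI)
  consider "b = 0" | "b > 0" "q ^ b \<le> D"
    using not_less_Least[of "b - 1" "\<lambda>b. D < q ^ Suc b"] by (cases b) (auto simp: b_def)
  then show ?thesis
  proof cases
    case 1
    have "fsize (cut_formula (nodes C) {} idx (out_node C)) \<le> M" for idx
    proof -
      have "Suc (node_depth (nodes C) (out_node C)) \<le> 2 * D div q + q"
        using depth Db 1 by (simp add: circuit_depth_def)
      then show ?thesis
        using fsize_cut_formula_less_depth[of "nodes C" "{}" idx "out_node C"]
          power_increasing[of _ _ "2::nat"] unfolding M_def by (meson less_imp_le le_trans one_le_numeral)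
    qed
    then obtain F where "nd_formula n 0 F" "nd_computes F (circuit_eval C)" "fsize F \<le> M + 2"
      using nd_formula_of_cut_set[OF wf, of "{}" M] by auto
    then show ?thesis using that[of b 0 F] Db by (simp add: M_def)
  next
    case 2
    obtain R where R: "finite R" "card R * b \<le> 2 * circuit_size C"
      "\<And>idx v. v \<in> insert (out_node C) R \<Longrightarrow> fsize (cut_formula (nodes C) R idx v) < 2 ^ (2 * D div q)"
      using exists_small_cut_set[OF wf depth _ 2] \<open>q \<ge> 2\<close> by auto
    have "(2::nat) ^ (2 * D div q) \<le> M" unfolding M_def by (intro power_increasing) auto
    then obtain F where "nd_formula n (card R) F" "nd_computes F (circuit_eval C)"
      "fsize F \<le> (card R + 1) * (M + 2)"
      using nd_formula_of_cut_set[OF wf R(1), of M] R(3) by (meson less_imp_le le_trans)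
    moreover have "card R * Suc b \<le> 4 * circuit_size C"
    proof -
      have "card R \<le> card R * b" using \<open>b > 0\<close> by simp
      then show ?thesis using R(2) by (simp only: mult_Suc_right)
    qed
    ultimately show ?thesis using that[of b "card R" F] Db by (simp add: M_def)
  qed
qed

lemma log_le_mult_log_base:
  fixes c L q :: real
  assumes "c > 0" "L > 0" "q \<ge> 1" "k \<ge> 1" "c * L < q ^ k"
  shows "log 2 L \<le> k * (log 2 q + \<bar>log 2 c\<bar>)"
proof -
  have "log 2 L < log 2 (q ^ k / c)"
    using assms by (intro log_less) (auto simp: field_simps)
  also have "\<dots> = k * log 2 q - log 2 c"
    using assms by (simp add: log_divide_pos log_nat_power)
  also have "\<dots> \<le> k * log 2 q + k * \<bar>log 2 c\<bar>"
    using assms mult_right_mono[of 1 "real k" "\<bar>log 2 c\<bar>"] by simp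
  finally show ?thesis by (simp add: algebra_simps)
qed

lemma two_power_div_le_powr:
  fixes x c \<epsilon> :: real
  assumes "x \<ge> 1" "real D \<le> c * log 2 x" "2 * c \<le> real q * \<epsilon>" "q > 0"
  shows "2 ^ (2 * D div q) \<le> x powr \<epsilon>"
proof -
  have "real (2 * D div q) \<le> 2 * real D / real q" using of_nat_div_le_of_nat[of "2 * D" q] by simp
  also have "\<dots> \<le> 2 * c * log 2 x / real q"
    using assms by (intro divide_right_mono) auto
  also have "\<dots> \<le> \<epsilon> * log 2 x"
    using assms mult_right_mono[OF assms(3), of "log 2 x"] by (simp add: field_simps)
  finally have "(2::real) ^ (2 * D div q) \<le> 2 powr (\<epsilon> * log 2 x)"
    by (simp add: powr_realpow[symmetric])
  also have "\<dots> = (2 powr log 2 x) powr \<epsilon>" by (simp add: powr_powr mult.commute)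
  also have "\<dots> = x powr \<epsilon>" using assms by simp
  finally show ?thesis .
qed

lemma nd_formula_of_log_depth_circuit:
  fixes c1 c2 \<epsilon> :: real
  assumes "c1 > 0" "c2 > 0" "n \<ge> 3" "q \<ge> 2" "2 * c2 \<le> real q * \<epsilon>"
    and wf: "wf_circuit n C" and size: "real (circuit_size C) \<le> c1 * real n"
    and depth: "real (circuit_depth C) \<le> c2 * log 2 (real n)"
  shows "\<exists>m F. nd_formula n m F \<and> nd_computes F (circuit_eval C)
      \<and> real m * log 2 (log 2 (real n)) \<le> 4 * c1 * (log 2 (real q) + \<bar>log 2 c2\<bar>) * real n
      \<and> real (fsize F) \<le> (4 * c1 + 1) * (2 ^ q + 2) * real n powr (1 + \<epsilon>)"
proof -
  define L where "L = log 2 (real n)"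
  define W where "W = log 2 (real q) + \<bar>log 2 c2\<bar>"
  define D where "D = nat \<lfloor>c2 * L\<rfloor>"
  have n: "real n \<ge> 1" and L: "L > 1" using \<open>n \<ge> 3\<close> by (auto simp: L_def less_log_iff)
  have "\<epsilon> > 0" using assms(2,4,5) by (smt (verit) of_nat_0_le_iff zero_less_mult_iff)
  have "circuit_depth C \<le> D" using depth by (simp add: D_def L_def le_nat_floor)
  then obtain b m F where Db: "D < q ^ Suc b" and m: "m * Suc b \<le> 4 * circuit_size C"
    and F: "nd_formula n m F" "nd_computes F (circuit_eval C)"
    "fsize F \<le> (m + 1) * (2 ^ (2 * D div q + q) + 2)"
    using nd_formula_of_depth_bounded_circuit[OF wf _ \<open>q \<ge> 2\<close>] by blast
  have m_real: "real m * real (Suc b) \<le> 4 * c1 * real n"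
  proof -
    have "real (m * Suc b) \<le> real (4 * circuit_size C)" using m by (simp only: of_nat_le_iff)
    then show ?thesis using size by (simp add: algebra_simps)
  qed
  have "c2 * L < real q ^ Suc b"
    using Db L \<open>c2 > 0\<close> by (simp add: D_def nat_less_iff floor_less_iff)
  then have "log 2 L \<le> real (Suc b) * W"
    unfolding W_def using log_le_mult_log_base[of c2 L "real q" "Suc b"] assms L by simp
  then have "real m * log 2 L \<le> real m * real (Suc b) * W"
    using mult_left_mono by (fastforce simp: mult.assoc)
  also have "\<dots> \<le> 4 * c1 * W * real n"
  proof -
    have "W \<ge> 0" using \<open>q \<ge> 2\<close> by (simp add: W_def)
    then show ?thesis using mult_right_mono[OF m_real] by (simp add: algebra_simps)
  qed
  finally have count: "real m * log 2 L \<le> 4 * c1 * W * real n" .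
  have formula_size: "real (2 ^ (2 * D div q + q) + 2) \<le> (2 ^ q + 2) * real n powr \<epsilon>"
  proof -
    have "(2::real) ^ (2 * D div q) \<le> real n powr \<epsilon>"
      using two_power_div_le_powr[OF n _ \<open>2 * c2 \<le> real q * \<epsilon>\<close>] \<open>q \<ge> 2\<close> L \<open>c2 > 0\<close>
      by (simp add: D_def L_def)
    then have "(2::real) ^ q * 2 ^ (2 * D div q) \<le> 2 ^ q * real n powr \<epsilon>"
      by (rule mult_left_mono) simp
    moreover have "1 \<le> real n powr \<epsilon>" using n \<open>\<epsilon> > 0\<close> by (intro ge_one_powr_ge_zero) auto
    moreover have "real (2 ^ (2 * D div q + q) + 2) = 2 ^ q * 2 ^ (2 * D div q) + 2"
      by (simp add: power_add)
    moreover have "(2 ^ q + 2) * real n powr \<epsilon> = 2 ^ q * real n powr \<epsilon> + 2 * real n powr \<epsilon>"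
      by (simp add: algebra_simps)
    ultimately show ?thesis by linarith
  qed
  have guesses: "real m + 1 \<le> (4 * c1 + 1) * real n"
  proof -
    have "real m \<le> real m * real (Suc b)" by (simp add: algebra_simps)
    then show ?thesis using m_real n by (simp only: distrib_right mult_1)
  qed
  have "real (fsize F) \<le> real ((m + 1) * (2 ^ (2 * D div q + q) + 2))"
    using F(3) by (simp only: of_nat_le_iff)
  also have "\<dots> = (real m + 1) * real (2 ^ (2 * D div q + q) + 2)" by (simp add: algebra_simps)
  also have "\<dots> \<le> ((4 * c1 + 1) * real n) * ((2 ^ q + 2) * real n powr \<epsilon>)"
    using guesses formula_size by (intro mult_mono) auto
  also have "\<dots> = (4 * c1 + 1) * (2 ^ q + 2) * real n powr (1 + \<epsilon>)"
    using n by (simp add: powr_add)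
  finally show ?thesis using F count by (auto simp: L_def W_def)
qed

theorem theorem4:
  fixes c1 c2 \<epsilon> :: real
  assumes "c1 > 0" and "c2 > 0" and "\<epsilon> > 0"
  shows "\<exists>K::real. \<forall>n::nat. n \<ge> 3 \<longrightarrow>
    (\<forall>C f. wf_circuit n C
        \<and> real (circuit_size C) \<le> c1 * real n
        \<and> real (circuit_depth C) \<le> c2 * log 2 (real n)
        \<and> (\<forall>x. f x = circuit_eval C x)
      \<longrightarrow> (\<exists>m F. nd_formula n m F \<and> nd_computes F f
            \<and> real m \<le> K * real n / log 2 (log 2 (real n))
            \<and> real (fsize F) \<le> K * real n powr (1 + \<epsilon>)))"
proof -
  define q :: nat where "q = nat \<lceil>2 * c2 / \<epsilon>\<rceil> + 2"
  have q: "q \<ge> 2" "2 * c2 \<le> real q * \<epsilon>"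
    using \<open>\<epsilon> > 0\<close> by (auto simp: q_def pos_divide_le_eq[symmetric]) linarith
  define A where "A = 4 * c1 * (log 2 (real q) + \<bar>log 2 c2\<bar>)"
  define B where "B = (4 * c1 + 1) * (2 ^ q + 2)"
  have "A \<ge> 0" "B \<ge> 0" using \<open>c1 > 0\<close> q(1) by (simp_all add: A_def B_def)
  show ?thesis
  proof (intro exI[of _ "A + B"] allI impI, elim conjE)
    fix n C and f :: "(nat \<Rightarrow> bool) \<Rightarrow> bool"
    assume n: "n \<ge> 3" and circuit: "wf_circuit n C" "real (circuit_size C) \<le> c1 * real n"
      "real (circuit_depth C) \<le> c2 * log 2 (real n)" and "\<forall>x. f x = circuit_eval C x"
    then have "f = circuit_eval C" by (simp add: fun_eq_iff)
    then obtain m F where F: "nd_formula n m F" "nd_computes F f"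
      and m: "real m * log 2 (log 2 (real n)) \<le> A * real n"
      and size: "real (fsize F) \<le> B * real n powr (1 + \<epsilon>)"
      using nd_formula_of_log_depth_circuit[OF \<open>c1 > 0\<close> \<open>c2 > 0\<close> n q circuit]
      unfolding A_def B_def by blast
    have "log 2 (log 2 (real n)) > 0" using n by (simp add: less_log_iff)
    then have "real m \<le> (A + B) * real n / log 2 (log 2 (real n))"
      using m \<open>B \<ge> 0\<close> by (simp add: pos_le_divide_eq distrib_right add_increasing2)
    moreover have "real (fsize F) \<le> (A + B) * real n powr (1 + \<epsilon>)"
      using size \<open>A \<ge> 0\<close> by (simp add: distrib_right add_increasing)
    ultimately show "\<exists>m F. nd_formula n m F \<and> nd_computes F f
        \<and> real m \<le> (A + B) * real n / log 2 (log 2 (real n))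
        \<and> real (fsize F) \<le> (A + B) * real n powr (1 + \<epsilon>)"
      using F by blast
  qed
qed

end
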